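(* Let $X$ be a Banach space (real or complex) with the alternative Daugavet property whose closed unit ball $B_X$ is an SCD set. Then $X$ is lush. In particular, every SCD Banach space with the alternative Daugavet property is lush.
   Context: $\mathbb{K}\in\{\mathbb{R},\mathbb{C}\}$ is the scalar field, $\mathbb{T}$ the set of scalars of modulus one, $S_X$ and $B_X$ the unit sphere and closed unit ball of $X$, $L(X)$ the bounded linear operators on $X$. For a convex bounded $A\subseteq X$, $x^*\in X^*$ and $\varepsilon>0$, the slice is $S(A,x^*,\varepsilon)=\{x\in A:\ \mathrm{Re}\,x^*(x)>\sup \mathrm{Re}\,x^*(A)-\varepsilon\}$. A convex bounded set $A\subseteq X$ is an SCD set if there is a sequence $(S_n)$ of slices of $A$ such that $A\subseteq\overline{\mathrm{conv}}(B)$ for every $B\subseteq A$ intersecting every $S_n$. A separable Banach space is an SCD space if every convex bounded subset of it is an SCD set. $X$ has the alternative Daugavet property if every rank-one $T\in L(X)$ satisfies $\max_{\theta\in\mathbb{T}}\|\mathrm{Id}+\theta T\|=1+\|T\|$. $X$ is lush if for every $x,y\in S_X$ and every $\varepsilon>0$ there is $x^*\in S_{X^*}$ such that the slice $S=S(B_X,x^*,\varepsilon)$ contains $x$ and $\mathrm{dist}(y,\mathrm{aconv}(S))<\varepsilon$, where $\mathrm{aconv}$ denotes the absolutely convex hull. *)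

theory Defs
  imports "HOL-Analysis.Analysis"
begin

class cbanach = banach +
  fixes scaleC :: "complex \<Rightarrow> 'a \<Rightarrow> 'a"
  assumes scaleC_of_real: "scaleC (complex_of_real r) x = r *\<^sub>R x"
    and scaleC_add_right: "scaleC a (x + y) = scaleC a x + scaleC a y"
    and scaleC_add_left: "scaleC (a + b) x = scaleC a x + scaleC b x"
    and scaleC_scaleC: "scaleC a (scaleC b x) = scaleC (a * b) x"
    and norm_scaleC: "norm (scaleC a x) = cmod a * norm x"

text \<open>Slice S(A, x*, eps), given through the real-valued map g = Re x*.\<close>
definition slice :: "'a set \<Rightarrow> ('a \<Rightarrow> real) \<Rightarrow> real \<Rightarrow> 'a set" where
  "slice A g \<epsilon> = {x \<in> A. g x > Sup (g ` A) - \<epsilon>}"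

definition dualR :: "('a::real_normed_vector \<Rightarrow> real) set" where
  "dualR = {f. bounded_linear f}"

definition SCD_set_R :: "'a::real_normed_vector set \<Rightarrow> bool" where
  "SCD_set_R A \<longleftrightarrow>
     (\<exists>(f :: nat \<Rightarrow> 'a \<Rightarrow> real) (\<epsilon> :: nat \<Rightarrow> real).
        (\<forall>n. f n \<in> dualR \<and> \<epsilon> n > 0) \<and>
        (\<forall>B. B \<subseteq> A \<longrightarrow> (\<forall>n. B \<inter> slice A (f n) (\<epsilon> n) \<noteq> {})
              \<longrightarrow> A \<subseteq> closure (convex hull B)))"

definition alt_daugavet_R :: "'a::real_normed_vector itself \<Rightarrow> bool" where
  "alt_daugavet_R _ \<longleftrightarrow>
     (\<forall>T :: 'a \<Rightarrow> 'a. bounded_linear T \<and> dim (range T) = 1 \<longrightarrow>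
        (SUP \<theta>\<in>{\<theta>::real. \<bar>\<theta>\<bar> = 1}. onorm (\<lambda>x. x + \<theta> *\<^sub>R T x)) = 1 + onorm T)"

definition aconv_R :: "'a::real_normed_vector set \<Rightarrow> 'a set" where
  "aconv_R S = convex hull {a *\<^sub>R s | a s. \<bar>a\<bar> \<le> 1 \<and> s \<in> S}"

definition lush_R :: "'a::real_normed_vector itself \<Rightarrow> bool" where
  "lush_R _ \<longleftrightarrow>
     (\<forall>x y :: 'a. norm x = 1 \<and> norm y = 1 \<longrightarrow>
        (\<forall>\<epsilon>>0. \<exists>f\<in>dualR. onorm f = 1 \<and>
            x \<in> slice (cball 0 1) f \<epsilon> \<and>
            infdist y (aconv_R (slice (cball 0 1) f \<epsilon>)) < \<epsilon>))"

definition dualC :: "('a::cbanach \<Rightarrow> complex) set" where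
  "dualC = {f. bounded_linear f \<and> (\<forall>c x. f (scaleC c x) = c * f x)}"

definition SCD_set_C :: "'a::cbanach set \<Rightarrow> bool" where
  "SCD_set_C A \<longleftrightarrow>
     (\<exists>(f :: nat \<Rightarrow> 'a \<Rightarrow> complex) (\<epsilon> :: nat \<Rightarrow> real).
        (\<forall>n. f n \<in> dualC \<and> \<epsilon> n > 0) \<and>
        (\<forall>B. B \<subseteq> A \<longrightarrow> (\<forall>n. B \<inter> slice A (\<lambda>x. Re (f n x)) (\<epsilon> n) \<noteq> {})
              \<longrightarrow> A \<subseteq> closure (convex hull B)))"

definition alt_daugavet_C :: "'a::cbanach itself \<Rightarrow> bool" where
  "alt_daugavet_C _ \<longleftrightarrow>
     (\<forall>T :: 'a \<Rightarrow> 'a. bounded_linear T \<and> (\<forall>c x. T (scaleC c x) = scaleC c (T x)) \<and>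
        vector_space.dim (scaleC :: complex \<Rightarrow> 'a \<Rightarrow> 'a) (range T) = 1 \<longrightarrow>
        (SUP \<theta>\<in>{\<theta>::complex. cmod \<theta> = 1}. onorm (\<lambda>x. x + scaleC \<theta> (T x))) = 1 + onorm T)"

definition aconv_C :: "'a::cbanach set \<Rightarrow> 'a set" where
  "aconv_C S = convex hull {scaleC a s | a s. cmod a \<le> 1 \<and> s \<in> S}"

definition lush_C :: "'a::cbanach itself \<Rightarrow> bool" where
  "lush_C _ \<longleftrightarrow>
     (\<forall>x y :: 'a. norm x = 1 \<and> norm y = 1 \<longrightarrow>
        (\<forall>\<epsilon>>0. \<exists>f\<in>dualC. onorm f = 1 \<and>
            x \<in> slice (cball 0 1) (\<lambda>z. Re (f z)) \<epsilon> \<and>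
            infdist y (aconv_C (slice (cball 0 1) (\<lambda>z. Re (f z)) \<epsilon>)) < \<epsilon>))"

end

(*
  Fix unit vectors x, y and the slices S_n of the unit ball witnessing that it is an SCD set.
  It suffices to find a norm-one functional h whose slice S of width \<epsilon> contains x and meets
  \<theta> S_n for every n and some unimodular \<theta>: the SCD property then puts the ball, hence y,
  into the closed absolutely convex hull of S.

  Applied to the rank-one operators z \<mapsto> f(z) y' with f a functional defining S_n, the
  alternative Daugavet property yields, for every unit y', a point z of S_n and a unimodular \<theta>
  with \<parallel>y' + \<theta> z\<parallel> close to 2. Starting at x and adding such points with weights 2^-n, each
  almost diametral to the current direction, gives a convergent path whose norm grows almost
  additively. A Hahn-Banach functional norming the limit of the path then almost norms x and
  every increment; it is the required h.
*)

theory Submission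
  imports Defs
begin

section \<open>Sublinear functionals and norming functionals\<close>

definition sublinear :: "('a::real_vector \<Rightarrow> real) \<Rightarrow> bool" where
  "sublinear p \<longleftrightarrow>
     (\<forall>x y. p (x + y) \<le> p x + p y) \<and> (\<forall>c x. 0 \<le> c \<longrightarrow> p (c *\<^sub>R x) = c * p x)"

lemma sublinear_add_le: "sublinear p \<Longrightarrow> p (x + y) \<le> p x + p y"
  unfolding sublinear_def by blast

lemma sublinear_scaleR: "sublinear p \<Longrightarrow> 0 \<le> c \<Longrightarrow> p (c *\<^sub>R x) = c * p x"
  unfolding sublinear_def by blast

lemma sublinear_zero: "sublinear p \<Longrightarrow> p 0 = 0"
  using sublinear_scaleR[of p 0 0] by simp

lemma sublinear_minus_le: "sublinear p \<Longrightarrow> - p (- x) \<le> p x"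
  using sublinear_add_le[of p x "- x"] sublinear_zero[of p] by simp

lemma sublinear_norm: "sublinear norm"
  unfolding sublinear_def by (simp add: norm_triangle_ineq)

text \<open>\<open>direction_inf q y\<close> is again sublinear and below \<open>q\<close>, so a minimal sublinear
  functional \<open>q\<close> coincides with it; evaluated at \<open>- y\<close> this forces \<open>q (- y) = - q y\<close>.\<close>
definition direction_inf :: "('a::real_vector \<Rightarrow> real) \<Rightarrow> 'a \<Rightarrow> 'a \<Rightarrow> real" where
  "direction_inf q y x = (INF t\<in>{0..}. q (x + t *\<^sub>R y) - t * q y)"

lemma direction_inf_le:
  assumes q: "sublinear q" and t: "0 \<le> t"
  shows "direction_inf q y x \<le> q (x + t *\<^sub>R y) - t * q y"
proof -
  have "- q (- x) \<le> q (x + s *\<^sub>R y) - s * q y" if "0 \<le> s" for s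
    using sublinear_add_le[OF q, of "x + s *\<^sub>R y" "- x"] sublinear_scaleR[OF q that] by simp
  then show ?thesis
    unfolding direction_inf_def using t by (intro cINF_lower bdd_belowI2) auto
qed

lemma direction_inf_greatest:
  "(\<And>t. 0 \<le> t \<Longrightarrow> m \<le> q (x + t *\<^sub>R y) - t * q y) \<Longrightarrow> m \<le> direction_inf q y x"
  unfolding direction_inf_def by (rule cINF_greatest) auto

lemma direction_inf_le_self: "sublinear q \<Longrightarrow> direction_inf q y x \<le> q x"
  using direction_inf_le[of q 0 y x] by simp

lemma direction_inf_add_le:
  assumes q: "sublinear q"
  shows "direction_inf q y (x + x') \<le> direction_inf q y x + direction_inf q y x'"
proof -
  have "direction_inf q y (x + x') - (q (x + t *\<^sub>R y) - t * q y) \<le> q (x' + s *\<^sub>R y) - s * q y"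
    if "0 \<le> t" "0 \<le> s" for t s
  proof -
    have "direction_inf q y (x + x') \<le> q ((x + t *\<^sub>R y) + (x' + s *\<^sub>R y)) - (t + s) * q y"
      using direction_inf_le[OF q, of "t + s" y "x + x'"] that by (simp add: algebra_simps)
    also have "\<dots> \<le> q (x + t *\<^sub>R y) + q (x' + s *\<^sub>R y) - (t + s) * q y"
      using sublinear_add_le[OF q] by simp
    finally show ?thesis by (simp add: algebra_simps)
  qed
  then have "direction_inf q y (x + x') - (q (x + t *\<^sub>R y) - t * q y) \<le> direction_inf q y x'"
    if "0 \<le> t" for t
    using that by (blast intro: direction_inf_greatest)
  then have "direction_inf q y (x + x') - direction_inf q y x' \<le> direction_inf q y x"
    by (intro direction_inf_greatest) (simp add: algebra_simps)
  then show ?thesis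
    by simp
qed

lemma direction_inf_scaleR:
  assumes q: "sublinear q" and c: "0 \<le> c"
  shows "direction_inf q y (c *\<^sub>R x) = c * direction_inf q y x"
proof (cases "c = 0")
  case True
  have "direction_inf q y 0 \<le> 0"
    using direction_inf_le_self[OF q, of y 0] sublinear_zero[OF q] by simp
  moreover have "0 \<le> direction_inf q y 0"
    by (rule direction_inf_greatest) (simp add: sublinear_scaleR[OF q])
  ultimately show ?thesis
    using True by simp
next
  case False
  with c have c: "0 < c" by simp
  have shift: "q (c *\<^sub>R x + t *\<^sub>R y) - t * q y = c * (q (x + (t / c) *\<^sub>R y) - (t / c) * q y)" for t
    using sublinear_scaleR[OF q, of c "x + (t / c) *\<^sub>R y"] c
    by (simp add: scaleR_add_right algebra_simps)
  show ?thesis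
  proof (rule antisym)
    have "direction_inf q y (c *\<^sub>R x) / c \<le> q (x + s *\<^sub>R y) - s * q y" if "0 \<le> s" for s
      using direction_inf_le[OF q, of "c * s" y "c *\<^sub>R x"] shift[of "c * s"] that c
      by (simp add: pos_divide_le_eq mult.commute)
    then have "direction_inf q y (c *\<^sub>R x) / c \<le> direction_inf q y x"
      by (rule direction_inf_greatest)
    then show "direction_inf q y (c *\<^sub>R x) \<le> c * direction_inf q y x"
      using c by (simp add: pos_divide_le_eq mult.commute)
  next
    show "c * direction_inf q y x \<le> direction_inf q y (c *\<^sub>R x)"
      using c direction_inf_le[OF q, of "t / c" y x for t]
      by (intro direction_inf_greatest) (simp add: shift)
  qed
qed

lemma sublinear_direction_inf: "sublinear q \<Longrightarrow> sublinear (direction_inf q y)"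
  by (simp add: sublinear_def direction_inf_add_le direction_inf_scaleR)

lemma sublinear_INF_chain:
  fixes C :: "('a::real_vector \<Rightarrow> real) set"
  assumes ne: "C \<noteq> {}" and chain: "\<And>r s. r \<in> C \<Longrightarrow> s \<in> C \<Longrightarrow> r \<le> s \<or> s \<le> r"
    and sub: "\<And>r. r \<in> C \<Longrightarrow> sublinear r" and below: "\<And>r. r \<in> C \<Longrightarrow> r \<le> p"
  shows "sublinear (\<lambda>x. INF r\<in>C. r x)" (is "sublinear ?u")
    and "r \<in> C \<Longrightarrow> (\<lambda>x. INF r\<in>C. r x) \<le> r"
proof -
  have bdd: "bdd_below ((\<lambda>r. r x) ` C)" for x
  proof (rule bdd_belowI2)
    fix r assume "r \<in> C"
    then show "- p (- x) \<le> r x"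
      using sublinear_minus_le[OF sub[OF \<open>r \<in> C\<close>], of x] le_funD[OF below[OF \<open>r \<in> C\<close>], of "- x"]
      by linarith
  qed
  have lower: "?u x \<le> r x" if "r \<in> C" for r x
    using bdd that by (rule cINF_lower)
  have greatest: "m \<le> ?u x" if "\<And>r. r \<in> C \<Longrightarrow> m \<le> r x" for m x
    using ne that by (rule cINF_greatest)
  show "r \<in> C \<Longrightarrow> ?u \<le> r"
    using lower by (simp add: le_fun_def)
  show "sublinear ?u"
    unfolding sublinear_def
  proof (intro conjI allI impI)
    fix x y
    have "?u (x + y) - s y \<le> r x" if rs: "r \<in> C" "s \<in> C" for r s
    proof -
      obtain t where "t \<in> C" "t \<le> r" "t \<le> s"
        using chain[OF rs] rs by auto
      then have "?u (x + y) \<le> t x + t y"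
        using lower[of t "x + y"] sublinear_add_le[OF sub[of t], of x y] by linarith
      also have "\<dots> \<le> r x + s y"
        using \<open>t \<le> r\<close> \<open>t \<le> s\<close> by (simp add: le_fun_def add_mono)
      finally show ?thesis by simp
    qed
    then have "?u (x + y) - s y \<le> ?u x" if "s \<in> C" for s
      using that by (blast intro: greatest)
    then have "?u (x + y) - ?u x \<le> ?u y"
      by (intro greatest) (simp add: algebra_simps)
    then show "?u (x + y) \<le> ?u x + ?u y" by simp
  next
    fix c :: real and x
    assume c: "0 \<le> c"
    have "c * ?u x = (INF r\<in>C. c * r x)"
      using continuous_at_Inf_mono[of "\<lambda>t. c * t" "(\<lambda>r. r x) ` C"] c ne bdd
      by (simp add: image_image mono_def mult_left_mono continuous_intros)
    then show "?u (c *\<^sub>R x) = c * ?u x"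
      using sublinear_scaleR[OF sub c] by simp
  qed
qed

lemma exists_minimal_sublinear:
  fixes p :: "'a::real_vector \<Rightarrow> real"
  assumes p: "sublinear p"
  shows "\<exists>q. sublinear q \<and> q \<le> p \<and> (\<forall>r. sublinear r \<and> r \<le> q \<longrightarrow> r = q)"
proof -
  define A where "A = {r. sublinear r \<and> r \<le> p}"
  have "partial_order_on A (relation_of (\<lambda>r s. s \<le> r) A)"
    by (auto simp: partial_order_on_def preorder_on_def refl_on_def trans_on_def
        antisym_on_def relation_of_def)
  moreover have "\<exists>u\<in>A. \<forall>r\<in>C. u \<le> r" if "C \<in> Chains (relation_of (\<lambda>r s. s \<le> r) A)" for C
  proof (cases "C = {}")
    case True
    then show ?thesis using p by (auto simp: A_def)
  next
    case False
    have CA: "C \<subseteq> A" and chain: "\<And>r s. r \<in> C \<Longrightarrow> s \<in> C \<Longrightarrow> r \<le> s \<or> s \<le> r"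
      using that by (auto simp: Chains_def relation_of_def)
    obtain r0 where "r0 \<in> C" using False by blast
    define u where "u x = (INF r\<in>C. r x)" for x
    have "sublinear u"
      unfolding u_def using False chain CA by (intro sublinear_INF_chain) (auto simp: A_def)
    moreover have lower: "u \<le> r" if "r \<in> C" for r
      unfolding u_def using False chain CA that by (intro sublinear_INF_chain(2)) (auto simp: A_def)
    moreover have "u \<le> p"
      using lower[OF \<open>r0 \<in> C\<close>] CA \<open>r0 \<in> C\<close> by (auto simp: A_def)
    ultimately show ?thesis by (auto simp: A_def)
  qed
  ultimately obtain q where "q \<in> A" and min: "\<And>r. r \<in> A \<Longrightarrow> r \<le> q \<Longrightarrow> r = q"
    using predicate_Zorn[of A "\<lambda>r s. s \<le> r"] by blast
  then show ?thesis
    by (auto simp: A_def intro: order_trans)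
qed

lemma minimal_sublinear_linear:
  assumes q: "sublinear q" and min: "\<And>r. sublinear r \<Longrightarrow> r \<le> q \<Longrightarrow> r = q"
  shows "linear q"
proof -
  have odd: "q (- y) = - q y" for y
  proof -
    have "direction_inf q y = q"
      using min[OF sublinear_direction_inf[OF q]] direction_inf_le_self[OF q] by (auto simp: le_fun_def)
    then have "q (- y) \<le> - q y"
      using direction_inf_le[OF q, of 1 y "- y"] sublinear_zero[OF q] by simp
    then show ?thesis
      using sublinear_minus_le[OF q, of y] by simp
  qed
  show ?thesis
  proof (rule linearI)
    fix x y
    show "q (x + y) = q x + q y"
      using sublinear_add_le[OF q, of x y] sublinear_add_le[OF q, of "- x" "- y"] odd[of x]
        odd[of y] odd[of "x + y"] by (simp add: add.commute)
  next
    fix c :: real and x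
    show "q (c *\<^sub>R x) = c *\<^sub>R q x"
      using sublinear_scaleR[OF q, of c x] sublinear_scaleR[OF q, of "- c" x] odd[of "c *\<^sub>R x"]
      by (cases "0 \<le> c") auto
  qed
qed

theorem exists_norming_functional:
  fixes v :: "'a::real_normed_vector"
  shows "\<exists>g. bounded_linear g \<and> (\<forall>x. g x \<le> norm x) \<and> g v = norm v"
proof -
  obtain q where q: "sublinear q" "q \<le> direction_inf norm v"
    and min: "\<And>r. sublinear r \<Longrightarrow> r \<le> q \<Longrightarrow> r = q"
    using exists_minimal_sublinear[OF sublinear_direction_inf[OF sublinear_norm]] by blast
  interpret linear q
    using minimal_sublinear_linear[OF q(1)] min by blast
  have below_norm: "q x \<le> norm x" for x
    using le_funD[OF q(2), of x] direction_inf_le_self[OF sublinear_norm, of v x] by simp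
  have "bounded_linear q"
  proof (rule bounded_linear_intro[where K = 1])
    show "norm (q x) \<le> norm x * 1" for x
      using below_norm[of x] below_norm[of "- x"] by (auto simp: neg)
  qed (simp_all add: add scale)
  moreover have "q (- v) \<le> - norm v"
    using le_funD[OF q(2), of "- v"] direction_inf_le[OF sublinear_norm, of 1 v "- v"] by simp
  then have "norm v \<le> q v"
    by (simp add: neg)
  ultimately show ?thesis
    using below_norm[of v] below_norm by (intro exI[of _ q]) auto
qed

section \<open>Almost diametral paths\<close>

lemma almost_diametral_scaleR_add:
  fixes y w :: "'a::real_normed_vector"
  assumes "norm y = 1" "norm w \<le> 1" "2 - \<eta> < norm (y + w)" "0 \<le> a" "a \<le> t"
  shows "t + a - t * \<eta> \<le> norm (t *\<^sub>R y + a *\<^sub>R w)"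
proof -
  have "t * (2 - \<eta>) \<le> t * norm (y + w)"
    using assms by (intro mult_left_mono) auto
  also have "\<dots> = norm ((t *\<^sub>R y + a *\<^sub>R w) + (t - a) *\<^sub>R w)"
    using assms by (simp add: algebra_simps flip: scaleR_add_right)
  also have "\<dots> \<le> norm (t *\<^sub>R y + a *\<^sub>R w) + (t - a)"
    using norm_triangle_ineq[of "t *\<^sub>R y + a *\<^sub>R w" "(t - a) *\<^sub>R w"]
      mult_left_le[of "norm w" "t - a"] assms by simp
  finally show ?thesis
    using assms by (simp add: algebra_simps)
qed

text \<open>The defect \<open>norm (V m) - g (V m)\<close> increases by at most \<open>d m\<close> per step and vanishes
  in the limit, so it is bounded by the tail of \<open>d\<close>.\<close>
lemma norming_limit_tail_bound:
  fixes V :: "nat \<Rightarrow> 'a::real_normed_vector"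
  assumes V: "V \<longlonglongrightarrow> v" and g: "bounded_linear g" "\<And>x. g x \<le> norm x" "g v = norm v"
    and d: "summable d" "\<And>n. norm (V n) + norm (V (Suc n) - V n) \<le> norm (V (Suc n)) + d n"
  shows "norm (V m) - g (V m) \<le> (\<Sum>k. d (k + m))"
proof -
  interpret g: bounded_linear g by fact
  define E where "E m = norm (V m) - g (V m)" for m
  define R where "R m = (\<Sum>k. d (k + m))" for m
  have "incseq (\<lambda>m. E m - R m)"
  proof (rule incseq_SucI)
    fix m
    have "R m = d m + R (Suc m)"
      using suminf_split_head[OF summable_ignore_initial_segment[OF d(1), of m]]
      by (simp add: R_def)
    moreover have "g (V (Suc m) - V m) \<le> norm (V (Suc m) - V m)"
      by (rule g(2))
    ultimately show "E m - R m \<le> E (Suc m) - R (Suc m)"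
      using d(2)[of m] by (simp add: E_def g.diff)
  qed
  moreover have "(\<lambda>m. E m - R m) \<longlonglongrightarrow> 0"
  proof -
    have "E \<longlonglongrightarrow> norm v - g v"
      unfolding E_def by (intro tendsto_intros V g.tendsto)
    moreover have "R \<longlonglongrightarrow> suminf d - suminf d"
      unfolding R_def suminf_minus_initial_segment[OF d(1)]
      by (intro tendsto_intros summable_LIMSEQ d(1))
    ultimately show ?thesis
      using tendsto_diff[of E 0 sequentially R 0] g(3) by simp
  qed
  ultimately have "E m - R m \<le> 0"
    by (rule incseq_le)
  then show ?thesis
    by (simp add: E_def R_def)
qed

text \<open>The step at \<open>V n\<close> uses a point of \<open>W n\<close> almost diametral to \<open>sgn (V n)\<close> with
  tolerance \<open>\<delta> n / norm (V n)\<close>, so that the norm gains at least \<open>a n - \<delta> n\<close>.\<close>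
lemma exists_diametral_path:
  fixes x0 :: "'a::real_normed_vector" and W :: "nat \<Rightarrow> 'a set"
  assumes diametral: "\<And>n y \<eta>. norm y = 1 \<Longrightarrow> 0 < \<eta> \<Longrightarrow> \<exists>w\<in>W n. norm w \<le> 1 \<and> 2 - \<eta> < norm (y + w)"
    and x0: "norm x0 = 1" and a: "\<And>n. a n \<le> 1" and \<delta>: "\<And>n. 0 < \<delta> n" "\<And>n. \<delta> n \<le> a n"
  shows "\<exists>V w. V 0 = x0 \<and> (\<forall>n. w n \<in> W n \<and> norm (w n) \<le> 1 \<and> 1 \<le> norm (V n) \<and>
                    V (Suc n) = V n + a n *\<^sub>R w n \<and> norm (V n) + a n - \<delta> n \<le> norm (V (Suc n)))"
proof -
  have "\<forall>n y \<eta>. \<exists>w. norm y = 1 \<and> 0 < \<eta> \<longrightarrow> w \<in> W n \<and> norm w \<le> 1 \<and> 2 - \<eta> < norm (y + w)"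
    using diametral by blast
  then obtain C where C: "\<And>n y \<eta>. norm y = 1 \<Longrightarrow> 0 < \<eta> \<Longrightarrow>
      C n y \<eta> \<in> W n \<and> norm (C n y \<eta>) \<le> 1 \<and> 2 - \<eta> < norm (y + C n y \<eta>)"
    by metis
  define V where "V = rec_nat x0 (\<lambda>n v. v + a n *\<^sub>R C n (sgn v) (\<delta> n / norm v))"
  define w where "w n = C n (sgn (V n)) (\<delta> n / norm (V n))" for n
  have V_Suc: "V (Suc n) = V n + a n *\<^sub>R w n" for n
    by (simp add: V_def w_def)
  have step: "w n \<in> W n \<and> norm (w n) \<le> 1 \<and> norm (V n) + a n - \<delta> n \<le> norm (V (Suc n))"
    if V1: "1 \<le> norm (V n)" for n
  proof -
    have y: "norm (sgn (V n)) = 1"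
      using V1 by (auto simp: norm_sgn)
    have \<eta>: "0 < \<delta> n / norm (V n)"
      using V1 \<delta>(1)[of n] by (intro divide_pos_pos) auto
    note w = C[where n = n, OF y \<eta>, folded w_def]
    have "norm (V n) + a n - norm (V n) * (\<delta> n / norm (V n)) \<le>
        norm (norm (V n) *\<^sub>R sgn (V n) + a n *\<^sub>R w n)"
      using w y V1 a[of n] \<delta>[of n] by (intro almost_diametral_scaleR_add) auto
    moreover have "V n \<noteq> 0"
      using V1 by auto
    ultimately show ?thesis
      using w by (simp add: V_Suc sgn_div_norm)
  qed
  have V1: "1 \<le> norm (V n)" for n
  proof (induction n)
    case 0
    then show ?case by (simp add: V_def x0)
  next
    case (Suc n)
    then show ?case using step[OF Suc] \<delta>(2)[of n] by linarith
  qed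
  show ?thesis
    using step[OF V1] V1 V_Suc by (intro exI[of _ V] exI[of _ w]) (simp add: V_def)
qed

lemma convergent_if_summable_steps:
  fixes V :: "nat \<Rightarrow> 'a::banach"
  assumes "\<And>n. norm (V (Suc n) - V n) \<le> b n" and "summable b"
  shows "convergent V"
proof -
  have "summable (\<lambda>n. V (Suc n) - V n)"
    by (rule summable_comparison_test[OF _ assms(2)]) (use assms(1) in auto)
  then have "(\<lambda>m. V 0 + (\<Sum>n<m. V (Suc n) - V n)) \<longlonglongrightarrow> V 0 + (\<Sum>n. V (Suc n) - V n)"
    by (intro tendsto_add tendsto_const summable_LIMSEQ)
  then show ?thesis
    by (auto simp: sum_lessThan_telescope convergent_def)
qed

lemma norming_functional_along_path:
  fixes V w :: "nat \<Rightarrow> 'a::real_normed_vector"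
  assumes V_lim: "V \<longlonglongrightarrow> v" and g: "bounded_linear g" "\<And>x. g x \<le> norm x" "g v = norm v"
    and w: "\<And>n. norm (w n) \<le> 1" and V_Suc: "\<And>n. V (Suc n) = V n + (1/2) ^ n *\<^sub>R w n"
    and incr: "\<And>n. norm (V n) + (1/2) ^ n - \<epsilon> / 4 * (1/4) ^ n \<le> norm (V (Suc n))"
    and \<epsilon>: "0 \<le> \<epsilon>"
  shows "norm (V 0) - \<epsilon> / 3 \<le> g (V 0)" and "1 - \<epsilon> / 3 \<le> g (w n)"
proof -
  interpret g: bounded_linear g by fact
  define \<delta> :: "nat \<Rightarrow> real" where "\<delta> n = \<epsilon> / 4 * (1/4) ^ n" for n
  have \<delta>_sums: "(\<lambda>k. \<delta> (k + m)) sums (\<epsilon> / 3 * (1/4) ^ m)" for m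
  proof -
    have "(\<lambda>k. \<epsilon> / 4 * (1/4) ^ m * (1/4) ^ k) sums (\<epsilon> / 4 * (1/4) ^ m * (1 / (1 - 1/4)))"
      by (intro sums_mult geometric_sums) simp
    then show ?thesis
      by (simp add: \<delta>_def power_add mult_ac)
  qed
  have step: "norm (V (Suc n) - V n) \<le> (1/2) ^ n" for n
    using w[of n] by (simp add: V_Suc mult_left_le)
  have "norm (V n) + norm (V (Suc n) - V n) \<le> norm (V (Suc n)) + \<delta> n" for n
    using step[of n] incr[of n] unfolding \<delta>_def by linarith
  then have "norm (V m) - g (V m) \<le> (\<Sum>k. \<delta> (k + m))" for m
    using \<delta>_sums[of 0] by (intro norming_limit_tail_bound[OF V_lim g]) (auto simp: sums_iff)
  then have gap: "norm (V m) - g (V m) \<le> \<epsilon> / 3 * (1/4) ^ m" for m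
    by (simp only: sums_unique[OF \<delta>_sums, symmetric])
  show "norm (V 0) - \<epsilon> / 3 \<le> g (V 0)"
    using gap[of 0] by simp
  have "(1/2) ^ n * g (w n) = g (V (Suc n)) - g (V n)"
    by (simp add: V_Suc g.add g.scale)
  also have "\<dots> \<ge> (1/2) ^ n - \<epsilon> / 3 * (1/4) ^ n"
    using gap[of "Suc n"] g(2)[of "V n"] incr[of n] by simp
  moreover have "\<epsilon> / 3 * (1/4) ^ n \<le> \<epsilon> / 3 * (1/2) ^ n"
    using \<epsilon> by (intro mult_left_mono power_mono) auto
  ultimately have "(1/2) ^ n * (1 - \<epsilon> / 3) \<le> (1/2) ^ n * g (w n)"
    by (simp add: algebra_simps)
  then show "1 - \<epsilon> / 3 \<le> g (w n)"
    by simp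
qed

lemma exists_almost_norming_functional:
  fixes x0 :: "'a::banach" and W :: "nat \<Rightarrow> 'a set"
  assumes diametral: "\<And>n y \<eta>. norm y = 1 \<Longrightarrow> 0 < \<eta> \<Longrightarrow> \<exists>w\<in>W n. norm w \<le> 1 \<and> 2 - \<eta> < norm (y + w)"
    and x0: "norm x0 = 1" and \<epsilon>: "0 < \<epsilon>" "\<epsilon> \<le> 1"
  shows "\<exists>g. bounded_linear g \<and> (\<forall>x. g x \<le> norm x) \<and> (\<exists>u. norm u = 1 \<and> g u = 1) \<and>
             1 - \<epsilon> < g x0 \<and> (\<forall>n. \<exists>w\<in>W n. 1 - \<epsilon> < g w)"
proof -
  have "\<epsilon> / 4 * (1/4) ^ n \<le> (1/2) ^ n" for n
  proof -
    have "\<epsilon> / 4 * (1/4) ^ n \<le> (1/4) ^ n"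
      by (rule mult_left_le_one_le) (use \<epsilon> in auto)
    also have "\<dots> \<le> (1/2) ^ n"
      by (rule power_mono) auto
    finally show ?thesis .
  qed
  then have "\<exists>V w. V 0 = x0 \<and> (\<forall>n. w n \<in> W n \<and> norm (w n) \<le> 1 \<and> 1 \<le> norm (V n) \<and>
      V (Suc n) = V n + (1/2) ^ n *\<^sub>R w n \<and>
      norm (V n) + (1/2) ^ n - \<epsilon> / 4 * (1/4) ^ n \<le> norm (V (Suc n)))"
    using \<epsilon> by (intro exists_diametral_path[OF diametral x0]) (auto simp: power_le_one)
  then obtain V w where V0: "V 0 = x0" and w: "\<And>n. w n \<in> W n" "\<And>n. norm (w n) \<le> 1"
    and V1: "\<And>n. 1 \<le> norm (V n)" and V_Suc: "\<And>n. V (Suc n) = V n + (1/2) ^ n *\<^sub>R w n"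
    and incr: "\<And>n. norm (V n) + (1/2) ^ n - \<epsilon> / 4 * (1/4) ^ n \<le> norm (V (Suc n))"
    by blast
  have "norm (V (Suc n) - V n) \<le> (1/2) ^ n" for n
    using w(2)[of n] by (simp add: V_Suc mult_left_le)
  then obtain v where V_lim: "V \<longlonglongrightarrow> v"
    using convergent_if_summable_steps[OF _ summable_geometric[of "1/2"]] convergent_def by fastforce
  have "1 \<le> norm v"
    using tendsto_norm[OF V_lim] V1 by (intro tendsto_lowerbound) auto
  then have "v \<noteq> 0"
    by auto
  obtain g where g: "bounded_linear g" "\<And>x. g x \<le> norm x" "g v = norm v"
    using exists_norming_functional[of v] by blast
  interpret g: bounded_linear g by fact
  note bounds = norming_functional_along_path[OF V_lim g w(2) V_Suc incr]
  have "1 - \<epsilon> < g x0"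
    using bounds(1) V0 x0 \<epsilon> by simp
  moreover have "1 - \<epsilon> < g (w n)" for n
    using bounds(2)[of n] \<epsilon> by simp
  moreover have "g (v /\<^sub>R norm v) = 1" and "norm (v /\<^sub>R norm v) = 1"
    using g(3) \<open>v \<noteq> 0\<close> by (simp_all add: g.scale)
  ultimately show ?thesis
    using g w(1) by blast
qed

section \<open>Banach spaces over \<open>\<real>\<close> or \<open>\<complex>\<close>\<close>

lemma onorm_gt_imp_unit_gt:
  fixes f :: "'a::real_normed_vector \<Rightarrow> 'b::real_normed_vector"
  assumes "bounded_linear f" "0 \<le> c" "c < onorm f"
  shows "\<exists>u. norm u = 1 \<and> c < norm (f u)"
proof (rule ccontr)
  interpret f: bounded_linear f by fact
  assume "\<nexists>u. norm u = 1 \<and> c < norm (f u)"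
  moreover have "norm (x /\<^sub>R norm x) = 1" if "x \<noteq> 0" for x
    using that by simp
  ultimately have unit_bound: "norm (f (x /\<^sub>R norm x)) \<le> c" if "x \<noteq> 0" for x
    using that not_less by blast
  then have "norm (f x) \<le> c * norm x" for x
  proof (cases "x = 0")
    case False
    then have "norm (f x) / norm x \<le> c"
      using unit_bound by (simp add: f.scale divide_inverse mult.commute)
    then show ?thesis
      using False by (simp add: pos_divide_le_eq)
  qed simp
  then have "onorm f \<le> c"
    by (rule onorm_bound[OF assms(2)])
  with assms(3) show False by simp
qed

lemma exists_unimodular_mult_eq_norm:
  fixes c :: "'s::real_normed_field"
  shows "\<exists>\<sigma>. norm \<sigma> = 1 \<and> \<sigma> * c = of_real (norm c)"
proof (cases "c = 0")
  case True
  then show ?thesis by (intro exI[of _ 1]) simp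
next
  case False
  then show ?thesis
    by (intro exI[of _ "of_real (norm c) / c"]) (simp add: norm_divide)
qed

lemma slice_cball_memI:
  fixes g :: "'a::real_normed_vector \<Rightarrow> real"
  assumes "\<And>x. norm x \<le> 1 \<Longrightarrow> g x \<le> N" "norm z \<le> 1" "N - e < g z"
  shows "z \<in> slice (cball 0 1) g e"
proof -
  have "Sup (g ` cball 0 1) \<le> N"
    using assms(1) by (intro cSup_least) auto
  then show ?thesis
    using assms unfolding slice_def by auto
qed

lemma slice_cball_norming:
  fixes g :: "'a::real_normed_vector \<Rightarrow> real"
  assumes "\<And>x. g x \<le> norm x" "norm u = 1" "g u = 1"
  shows "slice (cball 0 1) g e = {x \<in> cball 0 1. 1 - e < g x}"
proof -
  have "Sup (g ` cball 0 1) = 1"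
  proof (rule cSup_eq_maximum)
    show "1 \<in> g ` cball 0 1"
      using assms(2,3) by (intro image_eqI[of _ _ u]) auto
    show "t \<le> 1" if t: "t \<in> g ` cball 0 1" for t
    proof -
      obtain z where "z \<in> cball 0 1" "t = g z"
        using t by blast
      then show ?thesis
        using assms(1)[of z] by simp
    qed
  qed
  then show ?thesis
    by (simp add: slice_def)
qed

text \<open>A Banach space over \<open>\<bbbK> \<in> {\<real>, \<complex>}\<close>: \<open>scale\<close> is the scalar multiplication by \<open>\<bbbK>\<close>,
  \<open>re\<close> the real part on \<open>\<bbbK>\<close>. The last assumption is the passage from real to
  \<open>\<bbbK>\<close>-linear functionals (trivial over \<open>\<real>\<close>, complexification over \<open>\<complex>\<close>).\<close>
locale banach_over_field =
  fixes scale :: "'s::real_normed_field \<Rightarrow> 'a::banach \<Rightarrow> 'a"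
    and re :: "'s \<Rightarrow> real"
  assumes scale_of_real: "scale (of_real r) x = r *\<^sub>R x"
    and scale_add_right: "scale c (x + y) = scale c x + scale c y"
    and scale_add_left: "scale (b + c) x = scale b x + scale c x"
    and scale_scale: "scale b (scale c x) = scale (b * c) x"
    and norm_scale: "norm (scale c x) = norm c * norm x"
    and re_of_real: "re (of_real r) = r"
    and re_le_norm: "re c \<le> norm c"
    and lift_real_functional: "bounded_linear g \<Longrightarrow> (\<And>x. g x \<le> norm x) \<Longrightarrow>
      \<exists>f. bounded_linear f \<and> (\<forall>c x. f (scale c x) = c * f x) \<and>
          (\<forall>x. norm (f x) \<le> norm x) \<and> (\<forall>x. re (f x) = g x)"
begin

sublocale scalar: vector_space scale
proof
  show "scale 1 x = x" for x
    using scale_of_real[of 1 x] by simp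
qed (simp_all add: scale_add_right scale_add_left scale_scale)

lemma scale_scaleR: "scale c (r *\<^sub>R x) = r *\<^sub>R scale c x"
  by (simp only: scale_of_real[symmetric] scale_scale mult.commute)

text \<open>The notions of the theory \<open>Defs\<close>, stated once for both scalar fields.\<close>

definition dual :: "('a \<Rightarrow> 's) set" where
  "dual = {f. bounded_linear f \<and> (\<forall>c x. f (scale c x) = c * f x)}"

definition scd_set :: "'a set \<Rightarrow> bool" where
  "scd_set A \<longleftrightarrow>
     (\<exists>(f :: nat \<Rightarrow> 'a \<Rightarrow> 's) (\<epsilon> :: nat \<Rightarrow> real).
        (\<forall>n. f n \<in> dual \<and> \<epsilon> n > 0) \<and>
        (\<forall>B. B \<subseteq> A \<longrightarrow> (\<forall>n. B \<inter> slice A (\<lambda>x. re (f n x)) (\<epsilon> n) \<noteq> {})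
              \<longrightarrow> A \<subseteq> closure (convex hull B)))"

definition alt_daugavet :: bool where
  "alt_daugavet \<longleftrightarrow>
     (\<forall>T. bounded_linear T \<and> (\<forall>c x. T (scale c x) = scale c (T x)) \<and> scalar.dim (range T) = 1 \<longrightarrow>
        (SUP \<theta>\<in>{\<theta>. norm \<theta> = 1}. onorm (\<lambda>x. x + scale \<theta> (T x))) = 1 + onorm T)"

definition aconv :: "'a set \<Rightarrow> 'a set" where
  "aconv S = convex hull {scale a s | a s. norm a \<le> 1 \<and> s \<in> S}"

definition lush :: bool where
  "lush \<longleftrightarrow>
     (\<forall>x y. norm x = 1 \<and> norm y = 1 \<longrightarrow>
        (\<forall>\<epsilon>>0. \<exists>f\<in>dual. onorm f = 1 \<and>
            x \<in> slice (cball 0 1) (\<lambda>z. re (f z)) \<epsilon> \<and>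
            infdist y (aconv (slice (cball 0 1) (\<lambda>z. re (f z)) \<epsilon>)) < \<epsilon>))"

lemma rank_one_operator:
  assumes k: "k \<in> dual" "k \<noteq> (\<lambda>x. 0)" and y: "norm y = 1"
  defines "T \<equiv> \<lambda>x. scale (k x) y"
  shows "bounded_linear T" "\<And>c x. T (scale c x) = scale c (T x)"
    "scalar.dim (range T) = 1" "onorm T = onorm k"
proof -
  have k_lin: "bounded_linear k" and k_scale: "\<And>c x. k (scale c x) = c * k x"
    using k(1) by (auto simp: dual_def)
  interpret k: bounded_linear k by (fact k_lin)
  have norm_T: "norm (T x) = norm (k x)" for x
    using y by (simp add: T_def norm_scale)
  show "bounded_linear T"
  proof (rule bounded_linear_intro[where K = "onorm k"])
    show "T (x + x') = T x + T x'" for x x'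
      by (simp add: T_def k.add scale_add_left)
    show "T (r *\<^sub>R x) = r *\<^sub>R T x" for r x
    proof -
      have "T (r *\<^sub>R x) = scale (of_real r * k x) y"
        by (simp add: T_def k.scale scaleR_conv_of_real)
      also have "\<dots> = scale (of_real r) (T x)"
        by (simp add: T_def scale_scale)
      finally show ?thesis
        by (simp add: scale_of_real)
    qed
    show "norm (T x) \<le> norm x * onorm k" for x
      using onorm[OF k_lin, of x] by (simp add: norm_T mult.commute)
  qed
  show "T (scale c x) = scale c (T x)" for c x
    by (simp add: T_def k_scale scale_scale)
  obtain x1 where "k x1 \<noteq> 0"
    using k(2) by auto
  have "range T = scalar.span {y}"
  proof
    show "range T \<subseteq> scalar.span {y}"
      by (auto simp: T_def scalar.span_singleton)
    show "scalar.span {y} \<subseteq> range T"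
    proof
      fix w assume "w \<in> scalar.span {y}"
      then obtain c where "w = scale c y"
        by (auto simp: scalar.span_singleton)
      then have "T (scale (c / k x1) x1) = w"
        using \<open>k x1 \<noteq> 0\<close> by (simp add: T_def k_scale)
      then show "w \<in> range T"
        by blast
    qed
  qed
  moreover have "scalar.independent {y}"
    using y by (intro scalar.independent_insertI) (auto simp: scalar.span_empty scalar.independent_empty)
  ultimately show "scalar.dim (range T) = 1"
    using scalar.dim_span_eq_card_independent by simp
  show "onorm T = onorm k"
    unfolding onorm_def norm_T ..
qed

lemma bounded_linear_scale: "bounded_linear (scale c)"
  by (rule bounded_linear_intro[where K = "norm c"])
    (simp_all add: scale_add_right scale_scaleR norm_scale mult.commute)

lemma alt_daugavet_rank_one:
  assumes adp: alt_daugavet and k: "k \<in> dual" "onorm k = 1" and y: "norm y = 1" and \<eta>: "0 < \<eta>"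
  shows "\<exists>u \<theta>. norm u = 1 \<and> norm \<theta> = 1 \<and> 2 - \<eta> < norm (u + scale (\<theta> * k u) y)"
proof (cases "\<eta> \<le> 2")
  case False
  then show ?thesis
    using y by (intro exI[of _ y] exI[of _ 1]) (auto intro: less_le_trans[OF _ norm_ge_zero])
next
  case True
  define T where "T x = scale (k x) y" for x
  have "k \<noteq> (\<lambda>x. 0)"
    using k(2) by (auto simp: onorm_zero)
  note T = rank_one_operator[OF k(1) this y, folded T_def]
  have "(SUP \<theta>\<in>{\<theta>. norm \<theta> = 1}. onorm (\<lambda>x. x + scale \<theta> (T x))) = 2"
    using adp T k(2) unfolding alt_daugavet_def by simp
  then obtain \<theta> where \<theta>: "norm \<theta> = 1" "2 - \<eta> < onorm (\<lambda>x. x + scale \<theta> (T x))"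
    using \<eta> cSUP_least[of "{\<theta>. norm \<theta> = 1}" "\<lambda>\<theta>. onorm (\<lambda>x. x + scale \<theta> (T x))" "2 - \<eta>"]
    by (force simp: not_le intro: exI[of _ 1])
  have "bounded_linear (\<lambda>x. x + scale \<theta> (T x))"
    by (intro bounded_linear_add bounded_linear_ident
        bounded_linear_compose[OF bounded_linear_scale T(1)])
  then obtain u where "norm u = 1" "2 - \<eta> < norm (u + scale \<theta> (T u))"
    using onorm_gt_imp_unit_gt[OF _ _ \<theta>(2)] True by auto
  then show ?thesis
    using \<theta>(1) by (intro exI[of _ u] exI[of _ \<theta>]) (simp add: T_def scale_scale)
qed

lemma rotate_almost_diametral:
  assumes u: "norm u = 1" and \<theta>: "norm \<theta> = 1" and y: "norm y = 1" and c: "norm c \<le> 1"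
    and near: "2 - \<eta> < norm (u + scale (\<theta> * c) y)"
  shows "1 - \<eta> < norm c"
    and "\<exists>\<sigma>. norm \<sigma> = 1 \<and> \<sigma> * c = of_real (norm c) \<and> 2 - 2 * \<eta> < norm (y + scale (inverse \<theta> * \<sigma>) u)"
proof -
  have "norm (u + scale (\<theta> * c) y) \<le> 1 + norm c"
    using norm_triangle_ineq[of u "scale (\<theta> * c) y"] u \<theta> y by (simp add: norm_scale norm_mult)
  then show r: "1 - \<eta> < norm c"
    using near by simp
  obtain \<sigma> where \<sigma>: "norm \<sigma> = 1" "\<sigma> * c = of_real (norm c)"
    using exists_unimodular_mult_eq_norm by blast
  define \<rho> where "\<rho> = inverse \<theta> * \<sigma>"
  have \<rho>: "norm \<rho> = 1" "\<rho> * (\<theta> * c) = of_real (norm c)"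
    using \<theta> \<sigma> by (auto simp: \<rho>_def norm_divide field_simps)
  have "norm (u + scale (\<theta> * c) y) = norm (scale \<rho> (u + scale (\<theta> * c) y))"
    using \<rho>(1) by (simp add: norm_scale)
  also have "scale \<rho> (u + scale (\<theta> * c) y) = (y + scale \<rho> u) - (1 - norm c) *\<^sub>R y"
    using \<rho>(2) by (simp add: scale_add_right scale_scale scale_of_real algebra_simps)
  also have "norm (y + scale \<rho> u - (1 - norm c) *\<^sub>R y) \<le> norm (y + scale \<rho> u) + (1 - norm c)"
    using norm_triangle_ineq4[of "y + scale \<rho> u" "(1 - norm c) *\<^sub>R y"] y c by simp
  finally show "\<exists>\<sigma>. norm \<sigma> = 1 \<and> \<sigma> * c = of_real (norm c) \<and> 2 - 2 * \<eta> < norm (y + scale (inverse \<theta> * \<sigma>) u)"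
    using near r \<sigma> unfolding \<rho>_def by (intro exI[of _ \<sigma>]) auto
qed

lemma re_le_onorm:
  assumes "g \<in> dual" "norm x \<le> 1"
  shows "re (g x) \<le> onorm g"
proof -
  have "re (g x) \<le> onorm g * norm x"
    using re_le_norm[of "g x"] onorm[of g x] assms(1) by (simp add: dual_def)
  also have "\<dots> \<le> onorm g"
    using assms onorm_pos_le[of g] by (simp add: dual_def mult_left_le)
  finally show ?thesis .
qed

lemma onorm_eq_1_if_re_attains:
  assumes "h \<in> dual" "\<And>x. norm (h x) \<le> norm x" "norm u = 1" "re (h u) = 1"
  shows "onorm h = 1"
proof (rule antisym)
  show "onorm h \<le> 1"
    using assms(2) by (intro onorm_bound) auto
  show "1 \<le> onorm h"
    using onorm[of h u] assms re_le_norm[of "h u"] by (simp add: dual_def)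
qed

lemma dual_normalize:
  assumes g: "g \<in> dual" "g \<noteq> (\<lambda>x. 0)"
  defines "k \<equiv> \<lambda>x. g x / of_real (onorm g)"
  shows "k \<in> dual" "onorm k = 1" "0 < onorm g"
proof -
  have g_lin: "bounded_linear g" and g_scale: "\<And>c x. g (scale c x) = c * g x"
    using g(1) by (auto simp: dual_def)
  show N: "0 < onorm g"
    using g(2) onorm_pos_lt[OF g_lin] by auto
  have k_eq: "k = (\<lambda>x. (1 / onorm g) *\<^sub>R g x)"
    by (simp add: k_def scaleR_conv_of_real divide_inverse mult.commute of_real_inverse)
  show "k \<in> dual"
    using bounded_linear_compose[OF bounded_linear_scaleR_right g_lin]
    by (auto simp: dual_def k_eq g_scale)
  show "onorm k = 1"
    using onorm_scaleR[OF g_lin, of "1 / onorm g"] N by (simp add: k_eq)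
qed

lemma slice_point_almost_diametral:
  assumes adp: alt_daugavet and g: "g \<in> dual" and e: "0 < e" and y: "norm y = 1" and \<eta>: "0 < \<eta>"
  shows "\<exists>z \<theta>. z \<in> slice (cball 0 1) (\<lambda>x. re (g x)) e \<and> norm \<theta> = 1 \<and> 2 - \<eta> < norm (y + scale \<theta> z)"
proof (cases "g = (\<lambda>x. 0)")
  case True
  have "re 0 = 0"
    using re_of_real[of 0] by simp
  then have "slice (cball 0 1) (\<lambda>x. re (g x)) e = cball 0 1"
    using True e by (auto simp: slice_def)
  then show ?thesis
    using y \<eta> by (intro exI[of _ y] exI[of _ 1]) (simp flip: scaleR_2)
next
  case False
  have g_scale: "\<And>c x. g (scale c x) = c * g x"
    using g by (simp add: dual_def)
  define N where "N = onorm g"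
  define k where "k x = g x / of_real N" for x
  have k: "k \<in> dual" "onorm k = 1" and N: "0 < N"
    using dual_normalize[OF g False] by (simp_all add: k_def[abs_def] N_def)
  define \<eta>' where "\<eta>' = min (\<eta> / 2) (e / N)"
  have "0 < \<eta>'"
    using \<eta> e N by (simp add: \<eta>'_def)
  then obtain u \<theta> where u: "norm u = 1" and \<theta>: "norm \<theta> = 1"
    and near: "2 - \<eta>' < norm (u + scale (\<theta> * k u) y)"
    using alt_daugavet_rank_one[OF adp k y] by blast
  have "norm (k u) \<le> 1"
    using onorm[of k u] k u by (simp add: dual_def)
  note rot = rotate_almost_diametral[OF u \<theta> y this near]
  obtain \<sigma> where \<sigma>: "norm \<sigma> = 1" "\<sigma> * k u = of_real (norm (k u))"
    and far: "2 - 2 * \<eta>' < norm (y + scale (inverse \<theta> * \<sigma>) u)"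
    using rot(2) by blast
  define z where "z = scale \<sigma> u"
  have "z \<in> slice (cball 0 1) (\<lambda>x. re (g x)) e"
  proof (rule slice_cball_memI[where N = N])
    show "re (g x) \<le> N" if "norm x \<le> 1" for x
      using re_le_onorm[OF g that] by (simp add: N_def)
    show "norm z \<le> 1"
      using u \<sigma>(1) by (simp add: z_def norm_scale)
    have "g z = of_real (N * norm (k u))"
      using N \<sigma>(2) by (simp add: z_def g_scale k_def field_simps)
    then have "re (g z) = N * norm (k u)"
      by (simp only: re_of_real)
    moreover have "N * (1 - \<eta>') < N * norm (k u)"
      using rot(1) N by simp
    moreover have "\<eta>' \<le> e / N"
      by (simp add: \<eta>'_def)
    then have "N * \<eta>' \<le> e"
      using N by (simp add: pos_le_divide_eq mult.commute)
    ultimately show "N - e < re (g z)"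
      by (simp add: algebra_simps)
  qed
  moreover have "norm (inverse \<theta>) = 1"
    using \<theta> by (simp add: norm_inverse)
  moreover have "2 - \<eta> < norm (y + scale (inverse \<theta>) z)"
    using far by (simp add: z_def scale_scale \<eta>'_def)
  ultimately show ?thesis
    by (intro exI[of _ z] exI[of _ "inverse \<theta>"] conjI)
qed

lemma cball_subset_closure_aconv:
  assumes cover: "\<And>B. B \<subseteq> cball 0 1 \<Longrightarrow> (\<forall>n. B \<inter> S n \<noteq> {}) \<Longrightarrow> cball 0 1 \<subseteq> closure (convex hull B)"
    and S: "\<And>n. S n \<subseteq> cball 0 1"
    and rotate: "\<And>n. \<exists>z\<in>S n. \<exists>\<theta>. norm \<theta> = 1 \<and> scale \<theta> z \<in> C"
  shows "cball 0 1 \<subseteq> closure (aconv C)"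
proof -
  define B where "B = (\<Union>n. S n) \<inter> {z. \<exists>\<theta>. norm \<theta> = 1 \<and> scale \<theta> z \<in> C}"
  have "B \<subseteq> {scale a s | a s. norm a \<le> 1 \<and> s \<in> C}"
  proof
    fix z assume "z \<in> B"
    then obtain \<theta> where \<theta>: "norm \<theta> = 1" "scale \<theta> z \<in> C"
      by (auto simp: B_def)
    have "\<theta> \<noteq> 0"
      using \<theta>(1) by auto
    then have "z = scale (inverse \<theta>) (scale \<theta> z)"
      by (simp add: scale_scale)
    moreover have "norm (inverse \<theta>) \<le> 1"
      using \<theta>(1) by (simp add: norm_inverse)
    ultimately show "z \<in> {scale a s | a s. norm a \<le> 1 \<and> s \<in> C}"
      using \<theta>(2) by (intro CollectI exI[of _ "inverse \<theta>"] exI[of _ "scale \<theta> z"] conjI)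
  qed
  then have "closure (convex hull B) \<subseteq> closure (aconv C)"
    unfolding aconv_def by (intro closure_mono hull_mono)
  moreover have "cball 0 1 \<subseteq> closure (convex hull B)"
  proof (rule cover)
    show "B \<subseteq> cball 0 1"
      using S by (auto simp: B_def)
    show "\<forall>n. B \<inter> S n \<noteq> {}"
      using rotate by (fastforce simp: B_def)
  qed
  ultimately show ?thesis
    by blast
qed

lemma slice_meeting_rotated_slices:
  fixes f :: "nat \<Rightarrow> 'a \<Rightarrow> 's" and \<delta> :: "nat \<Rightarrow> real"
  assumes adp: alt_daugavet and f: "\<And>n. f n \<in> dual" "\<And>n. 0 < \<delta> n"
    and x: "norm x = 1" and \<epsilon>: "0 < \<epsilon>"
  shows "\<exists>h\<in>dual. onorm h = 1 \<and> x \<in> slice (cball 0 1) (\<lambda>z. re (h z)) \<epsilon> \<and>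
           (\<forall>n. \<exists>z\<in>slice (cball 0 1) (\<lambda>x. re (f n x)) (\<delta> n).
                \<exists>\<theta>. norm \<theta> = 1 \<and> scale \<theta> z \<in> slice (cball 0 1) (\<lambda>z. re (h z)) \<epsilon>)"
proof -
  define S where "S n = slice (cball 0 1) (\<lambda>x. re (f n x)) (\<delta> n)" for n
  have S_ball: "S n \<subseteq> cball 0 1" for n
    by (auto simp: S_def slice_def)
  define W where "W n = {scale \<theta> z | \<theta> z. z \<in> S n \<and> norm \<theta> = 1}" for n
  have "\<exists>w\<in>W n. norm w \<le> 1 \<and> 2 - \<eta> < norm (y + w)" if y: "norm y = 1" and \<eta>: "0 < \<eta>" for n y \<eta>
  proof -
    obtain z \<theta> where "z \<in> S n" "norm \<theta> = 1" "2 - \<eta> < norm (y + scale \<theta> z)"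
      using slice_point_almost_diametral[OF adp f(1,2) y \<eta>] unfolding S_def by blast
    moreover have "norm (scale \<theta> z) \<le> 1"
      using S_ball[of n] \<open>z \<in> S n\<close> \<open>norm \<theta> = 1\<close> by (auto simp: norm_scale)
    ultimately show ?thesis
      unfolding W_def by blast
  qed
  then have "\<exists>g. bounded_linear g \<and> (\<forall>x. g x \<le> norm x) \<and> (\<exists>u. norm u = 1 \<and> g u = 1) \<and>
             1 - min \<epsilon> 1 < g x \<and> (\<forall>n. \<exists>w\<in>W n. 1 - min \<epsilon> 1 < g w)"
    by (rule exists_almost_norming_functional[OF _ x]) (use \<epsilon> in auto)
  then obtain g where g: "bounded_linear g" "\<And>x. g x \<le> norm x" "\<exists>u. norm u = 1 \<and> g u = 1"
    "1 - min \<epsilon> 1 < g x" "\<And>n. \<exists>w\<in>W n. 1 - min \<epsilon> 1 < g w"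
    by blast
  obtain h where h: "h \<in> dual" "\<And>x. norm (h x) \<le> norm x" "\<And>x. re (h x) = g x"
    using lift_real_functional[OF g(1,2)] by (auto simp: dual_def)
  obtain u where u: "norm u = 1" "g u = 1"
    using g(3) by blast
  have Sl: "slice (cball 0 1) (\<lambda>z. re (h z)) \<epsilon> = {x \<in> cball 0 1. 1 - \<epsilon> < g x}"
    unfolding h(3) using slice_cball_norming[OF g(2) u] .
  have "\<exists>z\<in>S n. \<exists>\<theta>. norm \<theta> = 1 \<and> scale \<theta> z \<in> slice (cball 0 1) (\<lambda>z. re (h z)) \<epsilon>" for n
  proof -
    obtain z \<theta> where "z \<in> S n" "norm \<theta> = 1" "1 - min \<epsilon> 1 < g (scale \<theta> z)"
      using g(5)[of n] unfolding W_def by blast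
    moreover have "norm (scale \<theta> z) \<le> 1"
      using S_ball[of n] \<open>z \<in> S n\<close> \<open>norm \<theta> = 1\<close> by (auto simp: norm_scale)
    ultimately show ?thesis
      unfolding Sl by force
  qed
  moreover have "onorm h = 1"
    using onorm_eq_1_if_re_attains[OF h(1,2) u(1)] u(2) h(3) by simp
  moreover have "x \<in> slice (cball 0 1) (\<lambda>z. re (h z)) \<epsilon>"
    using x g(4) by (auto simp: Sl)
  ultimately show ?thesis
    using h(1) unfolding S_def by blast
qed

theorem lush_if_alt_daugavet_scd:
  assumes adp: alt_daugavet and scd: "scd_set (cball 0 1)"
  shows lush
  unfolding lush_def
proof (intro allI impI)
  fix x y :: 'a and \<epsilon> :: real
  assume xy: "norm x = 1 \<and> norm y = 1" and \<epsilon>: "0 < \<epsilon>"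
  obtain f and \<delta> :: "nat \<Rightarrow> real" where f: "\<forall>n. f n \<in> dual \<and> 0 < \<delta> n"
    and cover: "\<forall>B. B \<subseteq> cball 0 1 \<longrightarrow> (\<forall>n. B \<inter> slice (cball 0 1) (\<lambda>x. re (f n x)) (\<delta> n) \<noteq> {}) \<longrightarrow>
                  cball 0 1 \<subseteq> closure (convex hull B)"
    using scd unfolding scd_set_def by blast
  then obtain h where h: "h \<in> dual" "onorm h = 1" "x \<in> slice (cball 0 1) (\<lambda>z. re (h z)) \<epsilon>"
    and rotated: "\<And>n. \<exists>z\<in>slice (cball 0 1) (\<lambda>x. re (f n x)) (\<delta> n).
                    \<exists>\<theta>. norm \<theta> = 1 \<and> scale \<theta> z \<in> slice (cball 0 1) (\<lambda>z. re (h z)) \<epsilon>"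
    using slice_meeting_rotated_slices[OF adp _ _ _ \<epsilon>, of f \<delta> x] xy by blast
  have "cball 0 1 \<subseteq> closure (aconv (slice (cball 0 1) (\<lambda>z. re (h z)) \<epsilon>))"
    using cover rotated
    by (intro cball_subset_closure_aconv[of "\<lambda>n. slice (cball 0 1) (\<lambda>x. re (f n x)) (\<delta> n)"])
      (auto simp: slice_def)
  then have "y \<in> closure (aconv (slice (cball 0 1) (\<lambda>z. re (h z)) \<epsilon>))"
    using xy by auto
  then have "infdist y (aconv (slice (cball 0 1) (\<lambda>z. re (h z)) \<epsilon>)) = 0"
    using in_closure_iff_infdist_zero[of "aconv (slice (cball 0 1) (\<lambda>z. re (h z)) \<epsilon>)" y]
    by fastforce
  then show "\<exists>f\<in>dual. onorm f = 1 \<and> x \<in> slice (cball 0 1) (\<lambda>z. re (f z)) \<epsilon> \<and>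
            infdist y (aconv (slice (cball 0 1) (\<lambda>z. re (f z)) \<epsilon>)) < \<epsilon>"
    using h \<epsilon> by auto
qed

end

section \<open>The real and the complex case\<close>

lemma scaleC_scaleR: "scaleC c (r *\<^sub>R x) = r *\<^sub>R scaleC c (x::'a::cbanach)"
  by (metis mult.commute scaleC_of_real scaleC_scaleC)

lemma scaleC_eq_Re_Im: "scaleC c x = Re c *\<^sub>R x + Im c *\<^sub>R scaleC \<i> (x::'a::cbanach)"
proof -
  have c: "c = of_real (Re c) + \<i> * of_real (Im c)"
    by (simp add: complex_eq_iff)
  have "scaleC c x = scaleC (of_real (Re c)) x + scaleC (\<i> * of_real (Im c)) x"
    by (subst c) (rule scaleC_add_left)
  then show ?thesis
    by (simp add: scaleC_of_real scaleC_scaleC[symmetric] scaleC_scaleR)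
qed

lemma scaleC_ii_ii: "scaleC \<i> (scaleC \<i> x) = - (x::'a::cbanach)"
  using scaleC_of_real[of "-1" x] by (simp add: scaleC_scaleC)

lemma complexify_functional:
  fixes g :: "'a::cbanach \<Rightarrow> real"
  assumes g: "bounded_linear g" and g_le: "\<And>x. g x \<le> norm x"
  shows "\<exists>f. bounded_linear f \<and> (\<forall>c x. f (scaleC c x) = c * f x) \<and>
           (\<forall>x. cmod (f x) \<le> norm x) \<and> (\<forall>x. Re (f x) = g x)"
proof -
  interpret g: bounded_linear g by fact
  define f where "f x = Complex (g x) (- g (scaleC \<i> x))" for x
  have f_scaleC: "f (scaleC c x) = c * f x" for c x
  proof -
    have "scaleC \<i> (scaleC c x) = Re c *\<^sub>R scaleC \<i> x - Im c *\<^sub>R x"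
      unfolding scaleC_eq_Re_Im[of c x] by (simp add: scaleC_add_right scaleC_scaleR scaleC_ii_ii)
    then have "g (scaleC \<i> (scaleC c x)) = Re c * g (scaleC \<i> x) - Im c * g x"
      by (simp add: g.diff g.scale)
    moreover have "g (scaleC c x) = Re c * g x + Im c * g (scaleC \<i> x)"
      by (subst scaleC_eq_Re_Im) (simp add: g.add g.scale)
    ultimately show ?thesis
      by (simp add: f_def complex_eq_iff algebra_simps)
  qed
  have f_add: "f (x + y) = f x + f y" for x y
    by (simp add: f_def scaleC_add_right g.add complex_eq_iff)
  have f_bound: "cmod (f x) \<le> norm x" for x
  proof -
    obtain \<sigma> where \<sigma>: "cmod \<sigma> = 1" "\<sigma> * f x = of_real (cmod (f x))"
      using exists_unimodular_mult_eq_norm by blast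
    have "cmod (f x) = Re (f (scaleC \<sigma> x))"
      by (simp add: f_scaleC \<sigma>(2))
    also have "\<dots> \<le> norm (scaleC \<sigma> x)"
      by (simp add: f_def g_le)
    finally show ?thesis
      by (simp add: norm_scaleC \<sigma>(1))
  qed
  have "bounded_linear f"
  proof (rule bounded_linear_intro[where K = 1])
    show "f (r *\<^sub>R x) = r *\<^sub>R f x" for r x
      using f_scaleC[of "of_real r" x] by (simp add: scaleC_of_real scaleR_conv_of_real)
  qed (simp_all add: f_add f_bound)
  then show ?thesis
    using f_scaleC f_bound by (intro exI[of _ f]) (simp add: f_def)
qed

interpretation real_banach: banach_over_field "scaleR :: real \<Rightarrow> 'a \<Rightarrow> 'a::banach" "\<lambda>c. c"
proof
  fix g :: "'a \<Rightarrow> real"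
  assume g: "bounded_linear g" and g_le: "\<And>x. g x \<le> norm x"
  interpret g: bounded_linear g by fact
  have "norm (g x) \<le> norm x" for x
    using g_le[of x] g_le[of "- x"] by (simp add: g.neg)
  then show "\<exists>f. bounded_linear f \<and> (\<forall>c x. f (c *\<^sub>R x) = c * f x) \<and>
      (\<forall>x. norm (f x) \<le> norm x) \<and> (\<forall>x. f x = g x)"
    using g by (intro exI[of _ g]) (simp add: g.scale)
qed (simp_all add: scaleR_add_right scaleR_add_left)

interpretation complex_banach: banach_over_field "scaleC :: complex \<Rightarrow> 'a \<Rightarrow> 'a::cbanach" Re
  by unfold_locales (simp_all add: scaleC_of_real scaleC_add_right scaleC_add_left
      scaleC_scaleC norm_scaleC complex_Re_le_cmod complexify_functional)

lemma real_banach_dual: "real_banach.dual = dualR"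
  by (auto simp: real_banach.dual_def dualR_def bounded_linear.linear[THEN linear_scale])

lemma real_banach_alt_daugavet:
  "real_banach.alt_daugavet TYPE('a::banach) \<longleftrightarrow> alt_daugavet_R TYPE('a)"
  unfolding real_banach.alt_daugavet_def alt_daugavet_R_def dim_raw_def
  by (intro iff_allI) (auto simp: bounded_linear.linear[THEN linear_scale])

lemma real_banach_scd_set: "real_banach.scd_set A \<longleftrightarrow> SCD_set_R A"
  by (simp add: real_banach.scd_set_def SCD_set_R_def real_banach_dual)

lemma real_banach_lush: "real_banach.lush TYPE('a::banach) \<longleftrightarrow> lush_R TYPE('a)"
  by (simp add: real_banach.lush_def lush_R_def real_banach_dual real_banach.aconv_def aconv_R_def)

lemma complex_banach_alt_daugavet:
  "complex_banach.alt_daugavet TYPE('a::cbanach) \<longleftrightarrow> alt_daugavet_C TYPE('a)"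
  by (simp add: complex_banach.alt_daugavet_def alt_daugavet_C_def)

lemma complex_banach_scd_set: "complex_banach.scd_set A \<longleftrightarrow> SCD_set_C A"
  by (simp add: complex_banach.scd_set_def SCD_set_C_def complex_banach.dual_def dualC_def)

lemma complex_banach_lush: "complex_banach.lush TYPE('a::cbanach) \<longleftrightarrow> lush_C TYPE('a)"
  by (simp add: complex_banach.lush_def lush_C_def complex_banach.dual_def dualC_def
      complex_banach.aconv_def aconv_C_def)

theorem theorem4p4:
  shows "(alt_daugavet_R TYPE('a::banach) \<and> SCD_set_R (cball (0::'a) 1)
            \<longrightarrow> lush_R TYPE('a))
       \<and> (alt_daugavet_C TYPE('b::cbanach) \<and> SCD_set_C (cball (0::'b) 1)
            \<longrightarrow> lush_C TYPE('b))"
  using real_banach.lush_if_alt_daugavet_scd[where 'a = 'a]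
    complex_banach.lush_if_alt_daugavet_scd[where 'a = 'b]
  by (simp add: real_banach_alt_daugavet real_banach_scd_set real_banach_lush
      complex_banach_alt_daugavet complex_banach_scd_set complex_banach_lush)

end
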